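(* In the setup below, if $\alpha\Gamma^2\ge 4\log n+\omega_{\min}+2$ and $\omega_{\min}\ge4$, then $\max(|R|)\le\max(|R_{\mathrm{aprx}}|)+\max(|R_{\mathrm{neg}}|)\le 2$.
   Context: Setup (primitive Gaussian orbitals). Let $n\ge2$ and let $G=([n],E)$ be a graph with at least one edge and maximum degree at most $d$, where $1\le d\le n-1$. For $\zeta>0$ let $\xi_\zeta(\mathbf r)=(2\zeta/\pi)^{3/4}\exp(-\zeta\|\mathbf r\|^2)$ on $\mathbb R^3$. Fix reals $\beta\ge\alpha>0$, $\Gamma>0$, and distinct points $\mathbf x_{i,l}\in\mathbb R^3$ ($i\in[n]$, $l\in\{0,1,\dots,d\}$) such that: for each edge $\{i,j\}\in E$ there is exactly one pair $(p,q)\in[d]^2$ with $\|\mathbf x_{i,p}-\mathbf x_{j,q}\|=\gamma_{i,j}$, where $0<\gamma_{i,j}<\Gamma$ (write $\mathcal B(i,j)=\{(i,p),(j,q)\}$; these sets are disjoint for distinct edges); and every other pair of distinct points is at distance at least $\Gamma$. Primitive orbitals: $\phi_{i,0}(\mathbf r)=\xi_\beta(\mathbf r-\mathbf x_{i,0})$ and $\phi_{i,l}(\mathbf r)=\xi_\alpha(\mathbf r-\mathbf x_{i,l})$ for $l\ge1$. Let $\omega_{i,j}=\alpha\gamma_{i,j}^2$ and $\omega_{\min}=\min_{\{i,j\}\in E}\omega_{i,j}$. Let $S$ be the $n(d+1)\times n(d+1)$ overlap matrix $s_{(i,p),(j,q)}=\int\phi_{i,p}\phi_{j,q}\,d\mathbf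 r$ (positive definite). For a matrix $A$ indexed by the primitive indices $(i,p)$, the edge block $A_{i,j}$ is its $2\times2$ submatrix on $\mathcal B(i,j)$, $A_{\mathrm{block}}$ is obtained from $A$ by setting to zero all off-diagonal entries lying outside every edge block, and $A_{\mathrm{neg}}=A-A_{\mathrm{block}}$. Let $R=S^{-1/2}$, $R_{\mathrm{aprx}}=(S_{\mathrm{block}})^{-1/2}$ and $R_{\mathrm{neg}}=R-R_{\mathrm{aprx}}$. $\max(|A|)$ denotes the largest absolute value of an entry of $A$; $\log$ is the natural logarithm. *)

theory Defs
  imports "HOL-Analysis.Analysis"
begin

definition gauss :: "real \<Rightarrow> real^3 \<Rightarrow> real" where
  "gauss \<zeta> r = (2 * \<zeta> / pi) powr (3/4) * exp (- \<zeta> * (norm r)\<^sup>2)"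

definition orbital :: "real \<Rightarrow> real \<Rightarrow> (nat \<times> nat \<Rightarrow> real^3) \<Rightarrow> nat \<times> nat \<Rightarrow> real^3 \<Rightarrow> real" where
  "orbital \<alpha> \<beta> x il r = (if snd il = 0 then gauss \<beta> (r - x il) else gauss \<alpha> (r - x il))"

definition overlap :: "real \<Rightarrow> real \<Rightarrow> (nat \<times> nat \<Rightarrow> real^3) \<Rightarrow> nat \<times> nat \<Rightarrow> nat \<times> nat \<Rightarrow> real" where
  "overlap \<alpha> \<beta> x a b = (LINT r|lborel. orbital \<alpha> \<beta> x a r * orbital \<alpha> \<beta> x b r)"

text \<open>Real square matrices indexed by a finite set P, represented as functions
  (entries outside P x P are irrelevant, except where stated).\<close>
type_synonym 'i mat = "'i \<Rightarrow> 'i \<Rightarrow> real"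

definition mat_mult :: "'i set \<Rightarrow> 'i mat \<Rightarrow> 'i mat \<Rightarrow> 'i mat" where
  "mat_mult P A B = (\<lambda>a b. \<Sum>c\<in>P. A a c * B c b)"

definition is_identity :: "'i set \<Rightarrow> 'i mat \<Rightarrow> bool" where
  "is_identity P M \<longleftrightarrow> (\<forall>a\<in>P. \<forall>b\<in>P. M a b = (if a = b then 1 else 0))"

definition pos_def :: "'i set \<Rightarrow> 'i mat \<Rightarrow> bool" where
  "pos_def P A \<longleftrightarrow> (\<forall>a\<in>P. \<forall>b\<in>P. A a b = A b a) \<and>
     (\<forall>v. (\<exists>a\<in>P. v a \<noteq> 0) \<longrightarrow> (\<Sum>a\<in>P. \<Sum>b\<in>P. v a * A a b * v b) > 0)"

definition inv_sqrt :: "'i set \<Rightarrow> 'i mat \<Rightarrow> 'i mat" where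
  "inv_sqrt P A = (THE R. (\<forall>a b. (a \<notin> P \<or> b \<notin> P) \<longrightarrow> R a b = 0) \<and> pos_def P R \<and>
       is_identity P (mat_mult P (mat_mult P R R) A))"

definition max_abs :: "'i set \<Rightarrow> 'i mat \<Rightarrow> real" where
  "max_abs P A = Max {\<bar>A a b\<bar> | a b. a \<in> P \<and> b \<in> P}"

end

theory Submission
  imports Defs "HOL-Probability.Distributions" "HOL-Computational_Algebra.Formal_Power_Series"
begin

(*
  The overlap of two primitive Gaussians with exponents z1, z2 >= alpha is explicit,
    S_ab = (4 z1 z2 / (z1 + z2)^2)^(3/4) * exp (- z1 z2 / (z1 + z2) * |x_a - x_b|^2),
  so S_aa = 1 and 0 <= S_ab <= exp (- alpha |x_a - x_b|^2 / 2).  Hence every row of S, and of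
  S_block, deviates from the identity by at most 1/4 in l1-norm: a point has at most one partner in
  its edge block, contributing at most exp (- omega_min / 2) <= exp (-2), and each of the at most
  n^2 remaining points contributes at most exp (-3) / n^2 by the choice of Gamma.

  For a symmetric A = I + D whose rows of |D| sum to at most 1/4 the binomial series
  sum_k (-1/2 choose k) D^k converges.  Its square is the Neumann series of A^(-1), it is positive
  definite, and it is the only positive definite R with R R A = I, so it is A^(-1/2).  Its entries
  differ from those of I by at most sum_(k>=1) 4^(-k) = 1/3, whence max |R_aprx| <= 4/3 and
  max |R_neg| <= 2/3.
*)

section \<open>Overlap of two Gaussian orbitals\<close>

lemma has_bochner_integral_gauss_product_1d:
  fixes z1 z2 u w :: real
  assumes z1: "z1 > 0" and z2: "z2 > 0"
  shows "has_bochner_integral lborel (\<lambda>t. exp (-(z1 * (t - u)^2 + z2 * (t - w)^2)))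
           (sqrt (pi / (z1 + z2)) * exp (-(z1 * z2 / (z1 + z2)) * (u - w)^2))"
proof -
  define s where "s = z1 + z2"
  have s: "s > 0" using z1 z2 by (simp add: s_def)
  define m where "m = (z1 * u + z2 * w) / s"
  define \<sigma> where "\<sigma> = sqrt (inverse (2 * s))"
  \<comment> \<open>completing the square: the integrand is a multiple of the normal density with mean m\<close>
  have square: "z1 * (t - u)^2 + z2 * (t - w)^2 = s * (t - m)^2 + (z1 * z2 / s) * (u - w)^2" for t
  proof -
    have mean: "z1 * (t - u) + z2 * (t - w) = s * (t - m)"
      using s by (simp add: m_def s_def field_simps)
    have "s * (z1 * (t - u)^2 + z2 * (t - w)^2) = (s * (t - m))^2 + z1 * z2 * (u - w)^2"
      unfolding mean[symmetric] by (simp add: s_def power2_eq_square algebra_simps)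
    also have "\<dots> = s * (s * (t - m)^2 + (z1 * z2 / s) * (u - w)^2)"
      using s by (simp add: power2_eq_square field_simps)
    finally show ?thesis using s by simp
  qed
  have density: "normal_density m \<sigma> t = sqrt (s / pi) * exp (-(s * (t - m)^2))" for t
    using s unfolding normal_density_def \<sigma>_def by (simp add: real_sqrt_divide field_simps)
  have integrand: "exp (-(z1 * (t - u)^2 + z2 * (t - w)^2)) =
      (sqrt (pi / s) * exp (-(z1 * z2 / s) * (u - w)^2)) * normal_density m \<sigma> t" for t
  proof -
    have "sqrt (pi / s) * sqrt (s / pi) = 1" using s by (simp add: real_sqrt_mult[symmetric])
    then show ?thesis
      unfolding square density by (simp add: exp_add[symmetric] mult_ac)
  qed
  have "has_bochner_integral lborel (normal_density m \<sigma>) 1"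
    unfolding has_bochner_integral_iff using s by (simp add: \<sigma>_def)
  from has_bochner_integral_mult_right[OF this] show ?thesis
    unfolding s_def[symmetric] integrand by simp
qed

lemma norm_square_eq_sum_Basis: "(norm v)^2 = (\<Sum>b\<in>Basis. (v \<bullet> b)^2)"
  unfolding power2_norm_eq_inner by (subst euclidean_inner) (simp add: power2_eq_square)

lemma gauss_normalization_product:
  fixes z1 z2 :: real
  assumes z1: "z1 > 0" and z2: "z2 > 0"
  shows "(2 * z1 / pi) powr (3/4) * (2 * z2 / pi) powr (3/4) * (sqrt (pi / (z1 + z2)))^3
       = (4 * z1 * z2 / (z1 + z2)^2) powr (3/4)"
proof -
  define c where "c = pi / (z1 + z2)"
  have c: "c > 0" using z1 z2 by (simp add: c_def)
  have "(sqrt c)^3 = c powr (3/2)"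
    using c by (simp add: powr_half_sqrt[symmetric] powr_realpow[symmetric] powr_powr)
  also have "\<dots> = (c * c) powr (3/4)" using c by (simp add: powr_mult powr_add[symmetric])
  finally have "(sqrt c)^3 = (c * c) powr (3/4)" .
  moreover have "(2 * z1 / pi) * (2 * z2 / pi) * (c * c) = 4 * z1 * z2 / (z1 + z2)^2"
    unfolding c_def using z1 z2 by (simp add: field_simps power2_eq_square)
  ultimately show ?thesis
    unfolding c_def[symmetric] using z1 z2 c by (simp add: powr_mult[symmetric])
qed

lemma integral_gauss_product:
  fixes y1 y2 :: "real^3" and z1 z2 :: real
  assumes z1: "z1 > 0" and z2: "z2 > 0"
  shows "(LINT r|lborel. gauss z1 (r - y1) * gauss z2 (r - y2)) =
     (4 * z1 * z2 / (z1 + z2)^2) powr (3/4) * exp (-(z1 * z2 / (z1 + z2)) * (dist y1 y2)^2)"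
proof -
  define C where "C = (2 * z1 / pi) powr (3/4) * (2 * z2 / pi) powr (3/4)"
  have C: "C \<ge> 0" by (simp add: C_def)
  define f where "f = (\<lambda>(b::real^3) t. exp (-(z1 * (t - y1 \<bullet> b)^2 + z2 * (t - y2 \<bullet> b)^2)))"
  define I where "I = (\<lambda>(b::real^3).
     sqrt (pi / (z1 + z2)) * exp (-(z1 * z2 / (z1 + z2)) * (y1 \<bullet> b - y2 \<bullet> b)^2))"
  have f_nonneg: "0 \<le> f b t" for b t by (simp add: f_def)
  have I_nonneg: "0 \<le> I b" for b using z1 z2 by (simp add: I_def)
  have f_measurable[measurable]: "f b \<in> borel_measurable borel" for b unfolding f_def by simp
  have nn_integral_f: "(\<integral>\<^sup>+t. f b t \<partial>lborel) = ennreal (I b)" for b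
    using has_bochner_integral_gauss_product_1d[OF z1 z2, of "y1 \<bullet> b" "y2 \<bullet> b"] f_nonneg
    by (subst nn_integral_eq_integral) (auto simp: has_bochner_integral_iff f_def I_def)
  have factorize: "gauss z1 (r - y1) * gauss z2 (r - y2) = C * (\<Prod>b\<in>Basis. f b (r \<bullet> b))" for r
  proof -
    have "- z1 * (norm (r - y1))\<^sup>2 + - z2 * (norm (r - y2))\<^sup>2
        = (\<Sum>b\<in>Basis. -(z1 * (r \<bullet> b - y1 \<bullet> b)^2 + z2 * (r \<bullet> b - y2 \<bullet> b)^2))"
      unfolding norm_square_eq_sum_Basis sum.distrib sum_distrib_left
      by (simp add: inner_diff_left sum_negf sum_subtractf)
    then show ?thesis
      unfolding gauss_def C_def f_def by (simp add: exp_sum exp_add[symmetric] mult_ac)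
  qed
  have "(\<integral>\<^sup>+r. ennreal (gauss z1 (r - y1) * gauss z2 (r - y2)) \<partial>lborel)
      = (\<integral>\<^sup>+r. ennreal C * (\<Prod>b\<in>Basis. ennreal (f b (r \<bullet> b))) \<partial>lborel)"
    unfolding factorize using C f_nonneg
    by (intro nn_integral_cong) (simp add: ennreal_mult prod_nonneg prod_ennreal)
  also have "\<dots> = ennreal C * (\<Prod>b\<in>Basis. (\<integral>\<^sup>+t. ennreal (f b t) \<partial>lborel))"
    by (subst nn_integral_cmult) (measurable, subst nn_integral_lborel_prod, auto)
  also have "\<dots> = ennreal (C * (\<Prod>b\<in>Basis. I b))"
    using C I_nonneg by (simp add: nn_integral_f prod_ennreal ennreal_mult prod_nonneg)
  finally have "has_bochner_integral lborel (\<lambda>r. gauss z1 (r - y1) * gauss z2 (r - y2))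
      (C * (\<Prod>b\<in>Basis. I b))"
    using C I_nonneg
    by (intro has_bochner_integral_nn_integral) (auto simp: gauss_def prod_nonneg)
  then have "(LINT r|lborel. gauss z1 (r - y1) * gauss z2 (r - y2)) = C * (\<Prod>b\<in>Basis. I b)"
    by (rule has_bochner_integral_integral_eq)
  also have "(\<Prod>b\<in>Basis. I b) = (sqrt (pi / (z1 + z2)))^3 * exp (-(z1 * z2 / (z1 + z2)) * (dist y1 y2)^2)"
    unfolding I_def prod.distrib dist_norm norm_square_eq_sum_Basis
    by (simp add: exp_sum[symmetric] inner_diff_left sum_distrib_left)
  finally show ?thesis
    using gauss_normalization_product[OF z1 z2] unfolding C_def by (simp add: mult_ac)
qed

lemma overlap_eq:
  assumes "0 < \<alpha>" "0 < \<beta>"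
  defines "\<zeta> \<equiv> \<lambda>a::nat \<times> nat. if snd a = 0 then \<beta> else \<alpha>"
  shows "overlap \<alpha> \<beta> x a b = (4 * \<zeta> a * \<zeta> b / (\<zeta> a + \<zeta> b)^2) powr (3/4) *
            exp (-(\<zeta> a * \<zeta> b / (\<zeta> a + \<zeta> b)) * (dist (x a) (x b))^2)"
proof -
  have "0 < \<zeta> c" for c using assms by (simp add: \<zeta>_def)
  moreover have "orbital \<alpha> \<beta> x c r = gauss (\<zeta> c) (r - x c)" for c r
    by (simp add: orbital_def \<zeta>_def)
  ultimately show ?thesis unfolding overlap_def by (simp add: integral_gauss_product)
qed

lemma overlap_self:
  assumes "0 < \<alpha>" "0 < \<beta>"
  shows "overlap \<alpha> \<beta> x a a = 1"
  using assms by (simp add: overlap_eq power2_eq_square)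

lemma overlap_commute: "overlap \<alpha> \<beta> x a b = overlap \<alpha> \<beta> x b a"
  unfolding overlap_def by (simp add: mult.commute)

lemma overlap_nonneg:
  assumes "0 < \<alpha>" "0 < \<beta>"
  shows "0 \<le> overlap \<alpha> \<beta> x a b"
  using assms by (simp add: overlap_eq)

lemma overlap_le_exp:
  assumes "0 < \<alpha>" "\<alpha> \<le> \<beta>" and decay: "2 * t \<le> \<alpha> * (dist (x a) (x b))^2"
  shows "overlap \<alpha> \<beta> x a b \<le> exp (-t)"
proof -
  define z1 where "z1 = (if snd a = 0 then \<beta> else \<alpha>)"
  define z2 where "z2 = (if snd b = 0 then \<beta> else \<alpha>)"
  have z: "0 < z1" "\<alpha> \<le> z1" "0 < z2" "\<alpha> \<le> z2" using assms by (auto simp: z1_def z2_def)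
  \<comment> \<open>the prefactor is at most 1 by AM-GM, and the reduced exponent is at least \<open>\<alpha>/2\<close>\<close>
  have "4 * z1 * z2 \<le> (z1 + z2)^2" using sum_squares_ge_zero[of "z1 - z2" 0]
    by (simp add: power2_eq_square algebra_simps)
  then have prefactor: "(4 * z1 * z2 / (z1 + z2)^2) powr (3/4) \<le> 1"
    using z by (simp add: powr_le1)
  have "\<alpha> * z1 \<le> z2 * z1" "\<alpha> * z2 \<le> z1 * z2" using z by (simp_all add: mult_right_mono)
  then have "\<alpha> * (z1 + z2) \<le> 2 * (z1 * z2)" by (simp add: algebra_simps)
  then have reduced: "\<alpha> / 2 \<le> z1 * z2 / (z1 + z2)" using z by (simp add: field_simps)
  have "t \<le> \<alpha> / 2 * (dist (x a) (x b))^2" using decay by simp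
  also have "\<dots> \<le> z1 * z2 / (z1 + z2) * (dist (x a) (x b))^2"
    using reduced by (rule mult_right_mono) simp
  finally have "exp (-(z1 * z2 / (z1 + z2)) * (dist (x a) (x b))^2) \<le> exp (-t)" by simp
  then show ?thesis
    unfolding overlap_eq[OF assms(1) order.strict_trans2[OF assms(1,2)]] z1_def[symmetric] z2_def[symmetric]
    using prefactor by (intro order_trans[OF mult_left_le_one_le]) simp_all
qed

section \<open>Matrices indexed by a finite set\<close>

definition id_mat :: "'i set \<Rightarrow> 'i mat" where
  "id_mat P = (\<lambda>a b. if a \<in> P \<and> a = b then 1 else 0)"

definition supported :: "'i set \<Rightarrow> 'i mat \<Rightarrow> bool" where
  "supported P M \<longleftrightarrow> (\<forall>a b. a \<notin> P \<or> b \<notin> P \<longrightarrow> M a b = 0)"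

primrec mat_pow :: "'i set \<Rightarrow> 'i mat \<Rightarrow> nat \<Rightarrow> 'i mat" where
  "mat_pow P M 0 = id_mat P"
| "mat_pow P M (Suc k) = mat_mult P M (mat_pow P M k)"

lemma mat_mult_assoc:
  assumes "finite P"
  shows "mat_mult P (mat_mult P A B) C = mat_mult P A (mat_mult P B C)"
proof (intro ext)
  fix a b
  have "(\<Sum>c\<in>P. (\<Sum>d\<in>P. A a d * B d c) * C c b) = (\<Sum>c\<in>P. \<Sum>d\<in>P. A a d * B d c * C c b)"
    by (simp add: sum_distrib_right)
  also have "\<dots> = (\<Sum>d\<in>P. \<Sum>c\<in>P. A a d * B d c * C c b)" by (rule sum.swap)
  also have "\<dots> = (\<Sum>d\<in>P. A a d * (\<Sum>c\<in>P. B d c * C c b))"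
    by (simp add: sum_distrib_left mult.assoc)
  finally show "mat_mult P (mat_mult P A B) C a b = mat_mult P A (mat_mult P B C) a b"
    by (simp add: mat_mult_def)
qed

lemma sum_mult_id_mat_right:
  assumes "finite P" "b \<in> P"
  shows "(\<Sum>c\<in>P. f c * id_mat P c b) = f b"
proof -
  have "(\<Sum>c\<in>P. f c * id_mat P c b) = (\<Sum>c\<in>P. if c = b then f c else 0)"
    by (intro sum.cong) (auto simp: id_mat_def assms)
  then show ?thesis using assms by simp
qed

lemma sum_mult_id_mat_left:
  assumes "finite P" "a \<in> P"
  shows "(\<Sum>c\<in>P. id_mat P a c * f c) = f a"
proof -
  have "(\<Sum>c\<in>P. id_mat P a c * f c) = (\<Sum>c\<in>P. if a = c then f c else 0)"
    by (intro sum.cong) (auto simp: id_mat_def assms)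
  then show ?thesis using assms by simp
qed

lemma mat_mult_id_mat_left:
  assumes "finite P" "supported P M"
  shows "mat_mult P (id_mat P) M = M"
proof (intro ext)
  fix a b
  show "mat_mult P (id_mat P) M a b = M a b"
  proof (cases "a \<in> P")
    case True
    then show ?thesis using assms by (simp add: mat_mult_def sum_mult_id_mat_left)
  next
    case False
    then show ?thesis using assms by (simp add: mat_mult_def supported_def id_mat_def)
  qed
qed

lemma mat_mult_id_mat_right:
  assumes "finite P" "supported P M"
  shows "mat_mult P M (id_mat P) = M"
proof (intro ext)
  fix a b
  show "mat_mult P M (id_mat P) a b = M a b"
  proof (cases "b \<in> P")
    case True
    then show ?thesis using assms by (simp add: mat_mult_def sum_mult_id_mat_right)
  next
    case False
    then show ?thesis using assms by (auto simp: mat_mult_def supported_def id_mat_def intro!: sum.neutral)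
  qed
qed

lemma supported_id_mat: "supported P (id_mat P)"
  by (simp add: supported_def id_mat_def)

lemma supported_mat_mult: "supported P A \<Longrightarrow> supported P B \<Longrightarrow> supported P (mat_mult P A B)"
  unfolding supported_def mat_mult_def by auto

lemma supported_mat_pow: "supported P M \<Longrightarrow> supported P (mat_pow P M k)"
  by (induction k) (simp_all add: supported_id_mat supported_mat_mult)

lemma mat_pow_add:
  assumes "finite P" "supported P M"
  shows "mat_mult P (mat_pow P M i) (mat_pow P M j) = mat_pow P M (i + j)"
  by (induction i) (simp_all add: assms mat_mult_assoc mat_mult_id_mat_left supported_mat_pow)

lemma mat_pow_Suc_right:
  assumes "finite P" "supported P M"
  shows "mat_pow P M (Suc k) = mat_mult P (mat_pow P M k) M"
  using mat_pow_add[OF assms, of k 1] by (simp add: assms mat_mult_id_mat_right)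

lemma mat_pow_symmetric:
  assumes "finite P" "supported P M" "\<And>a b. M a b = M b a"
  shows "mat_pow P M k a b = mat_pow P M k b a"
proof (induction k arbitrary: a b)
  case 0 show ?case by (auto simp: id_mat_def)
next
  case (Suc k)
  have "mat_pow P M (Suc k) a b = (\<Sum>c\<in>P. mat_pow P M k b c * M c a)"
    using Suc by (simp add: mat_mult_def assms(3) mult.commute)
  also have "\<dots> = mat_pow P M (Suc k) b a"
    by (simp only: mat_pow_Suc_right[OF assms(1,2)] mat_mult_def)
  finally show ?case .
qed

lemma row_sum_mat_pow_le:
  assumes "finite P" and rows: "\<And>a. (\<Sum>b\<in>P. \<bar>M a b\<bar>) \<le> r" and "0 \<le> r"
  shows "(\<Sum>b\<in>P. \<bar>mat_pow P M k a b\<bar>) \<le> r ^ k"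
proof (induction k arbitrary: a)
  case 0
  show ?case using assms(1) by (cases "a \<in> P") (simp_all add: id_mat_def)
next
  case (Suc k)
  have "(\<Sum>b\<in>P. \<bar>mat_pow P M (Suc k) a b\<bar>) \<le> (\<Sum>b\<in>P. \<Sum>c\<in>P. \<bar>M a c\<bar> * \<bar>mat_pow P M k c b\<bar>)"
    by (auto simp: mat_mult_def abs_mult intro!: sum_mono order_trans[OF sum_abs])
  also have "\<dots> = (\<Sum>c\<in>P. \<bar>M a c\<bar> * (\<Sum>b\<in>P. \<bar>mat_pow P M k c b\<bar>))"
    by (subst sum.swap) (simp add: sum_distrib_left)
  also have "\<dots> \<le> (\<Sum>c\<in>P. \<bar>M a c\<bar> * r ^ k)"
    by (intro sum_mono mult_left_mono Suc) auto
  also have "\<dots> \<le> r * r ^ k"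
    using rows[of a] assms(3) by (simp add: sum_distrib_right[symmetric] mult_right_mono)
  finally show ?case by simp
qed

lemma abs_entry_le_row_sum:
  assumes "finite P" "supported P M"
  shows "\<bar>M a b\<bar> \<le> (\<Sum>c\<in>P. \<bar>M a c\<bar>)"
proof (cases "b \<in> P")
  case True
  then show ?thesis using assms(1) by (intro member_le_sum) auto
next
  case False
  then show ?thesis using assms(2) by (simp add: supported_def sum_nonneg)
qed

lemma abs_quad_form_le:
  fixes M :: "'i mat" and v :: "'i \<Rightarrow> real"
  assumes "finite P" and sym: "\<And>a b. a \<in> P \<Longrightarrow> b \<in> P \<Longrightarrow> M a b = M b a"
    and rows: "\<And>a. a \<in> P \<Longrightarrow> (\<Sum>b\<in>P. \<bar>M a b\<bar>) \<le> r"
  shows "\<bar>\<Sum>a\<in>P. \<Sum>b\<in>P. v a * M a b * v b\<bar> \<le> r * (\<Sum>a\<in>P. (v a)^2)"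
proof -
  have termwise: "\<bar>v a * M a b * v b\<bar> \<le> \<bar>M a b\<bar> * (v a)^2 / 2 + \<bar>M b a\<bar> * (v b)^2 / 2"
    if "a \<in> P" "b \<in> P" for a b
  proof -
    have "2 * \<bar>v a\<bar> * \<bar>v b\<bar> \<le> (v a)^2 + (v b)^2"
      using sum_squares_ge_zero[of "\<bar>v a\<bar> - \<bar>v b\<bar>" 0] by (simp add: power2_eq_square algebra_simps)
    from mult_left_mono[OF this abs_ge_zero[of "M a b"]] show ?thesis
      using sym[OF that] by (simp add: abs_mult algebra_simps)
  qed
  have "\<bar>\<Sum>a\<in>P. \<Sum>b\<in>P. v a * M a b * v b\<bar>
      \<le> (\<Sum>a\<in>P. \<Sum>b\<in>P. \<bar>M a b\<bar> * (v a)^2 / 2 + \<bar>M b a\<bar> * (v b)^2 / 2)"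
    using termwise by (intro order_trans[OF sum_abs] sum_mono order_trans[OF sum_abs]) auto
  also have "\<dots> = (\<Sum>a\<in>P. \<Sum>b\<in>P. \<bar>M a b\<bar> * (v a)^2) / 2 + (\<Sum>a\<in>P. \<Sum>b\<in>P. \<bar>M b a\<bar> * (v b)^2) / 2"
    by (simp add: sum.distrib sum_divide_distrib)
  also have "(\<Sum>a\<in>P. \<Sum>b\<in>P. \<bar>M b a\<bar> * (v b)^2) = (\<Sum>a\<in>P. \<Sum>b\<in>P. \<bar>M a b\<bar> * (v a)^2)"
    by (rule sum.swap)
  also have "(\<Sum>a\<in>P. \<Sum>b\<in>P. \<bar>M a b\<bar> * (v a)^2) / 2 + (\<Sum>a\<in>P. \<Sum>b\<in>P. \<bar>M a b\<bar> * (v a)^2) / 2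
      = (\<Sum>a\<in>P. (v a)^2 * (\<Sum>b\<in>P. \<bar>M a b\<bar>))"
    by (simp add: sum_distrib_left mult.commute)
  also have "\<dots> \<le> (\<Sum>a\<in>P. (v a)^2 * r)"
    using rows by (intro sum_mono mult_left_mono) auto
  finally show ?thesis by (simp add: sum_distrib_left mult.commute)
qed

lemma pos_def_quad_form_nonneg:
  assumes "pos_def P R"
  shows "0 \<le> (\<Sum>a\<in>P. \<Sum>b\<in>P. v a * R a b * v b)"
proof (cases "\<exists>a\<in>P. v a \<noteq> 0")
  case True
  then show ?thesis using assms unfolding pos_def_def by (auto intro: less_imp_le)
qed simp

lemma pos_def_of_row_deviation:
  assumes "finite P" and sym: "\<And>a b. a \<in> P \<Longrightarrow> b \<in> P \<Longrightarrow> M a b = M b a"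
    and rows: "\<And>a. a \<in> P \<Longrightarrow> (\<Sum>b\<in>P. \<bar>M a b - (if a = b then 1 else 0)\<bar>) \<le> r" and "r < 1"
  shows "pos_def P M"
  unfolding pos_def_def
proof (intro conjI ballI allI impI)
  fix v :: "'a \<Rightarrow> real"
  assume "\<exists>a\<in>P. v a \<noteq> 0"
  then have V: "0 < (\<Sum>a\<in>P. (v a)^2)" using assms(1) by (auto intro: sum_pos2)
  define D where "D a b = M a b - (if a = b then 1 else 0)" for a b
  have "(\<Sum>a\<in>P. \<Sum>b\<in>P. v a * M a b * v b) = (\<Sum>a\<in>P. \<Sum>b\<in>P. v a * D a b * v b)
      + (\<Sum>a\<in>P. \<Sum>b\<in>P. v a * (if a = b then 1 else 0) * v b)"
    by (simp add: D_def right_diff_distrib left_diff_distrib sum_subtractf)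
  also have "(\<Sum>a\<in>P. \<Sum>b\<in>P. v a * (if a = b then 1 else 0) * v b) = (\<Sum>a\<in>P. (v a)^2)"
    using assms(1) by (simp add: power2_eq_square if_distrib if_distribR cong: if_cong)
  finally have "(\<Sum>a\<in>P. \<Sum>b\<in>P. v a * M a b * v b)
      = (\<Sum>a\<in>P. (v a)^2) + (\<Sum>a\<in>P. \<Sum>b\<in>P. v a * D a b * v b)" by simp
  moreover have "\<bar>\<Sum>a\<in>P. \<Sum>b\<in>P. v a * D a b * v b\<bar> \<le> r * (\<Sum>a\<in>P. (v a)^2)"
    using assms(1) by (rule abs_quad_form_le) (auto simp: D_def sym rows)
  moreover have "r * (\<Sum>a\<in>P. (v a)^2) < (\<Sum>a\<in>P. (v a)^2)" using V \<open>r < 1\<close> by simp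
  ultimately show "0 < (\<Sum>a\<in>P. \<Sum>b\<in>P. v a * M a b * v b)" by linarith
qed (rule sym)

lemma sum_pair_sylvester_eq_quad_forms:
  fixes X R T :: "'i mat"
  shows "(\<Sum>a\<in>P. \<Sum>b\<in>P. X a b * ((\<Sum>c\<in>P. R a c * X c b) + (\<Sum>c\<in>P. X a c * T c b)))
   = (\<Sum>b\<in>P. \<Sum>a\<in>P. \<Sum>c\<in>P. X a b * R a c * X c b) + (\<Sum>a\<in>P. \<Sum>c\<in>P. \<Sum>b\<in>P. X a c * T c b * X a b)"
proof -
  have "(\<Sum>a\<in>P. \<Sum>b\<in>P. X a b * ((\<Sum>c\<in>P. R a c * X c b) + (\<Sum>c\<in>P. X a c * T c b)))
      = (\<Sum>a\<in>P. \<Sum>b\<in>P. (\<Sum>c\<in>P. X a b * R a c * X c b) + (\<Sum>c\<in>P. X a c * T c b * X a b))"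
    by (simp add: distrib_left sum_distrib_left mult_ac)
  also have "\<dots> = (\<Sum>a\<in>P. \<Sum>b\<in>P. \<Sum>c\<in>P. X a b * R a c * X c b)
      + (\<Sum>a\<in>P. \<Sum>b\<in>P. \<Sum>c\<in>P. X a c * T c b * X a b)"
    by (simp only: sum.distrib)
  also have "(\<Sum>a\<in>P. \<Sum>b\<in>P. \<Sum>c\<in>P. X a b * R a c * X c b) = (\<Sum>b\<in>P. \<Sum>a\<in>P. \<Sum>c\<in>P. X a b * R a c * X c b)"
    by (rule sum.swap)
  also have "(\<Sum>a\<in>P. \<Sum>b\<in>P. \<Sum>c\<in>P. X a c * T c b * X a b) = (\<Sum>a\<in>P. \<Sum>c\<in>P. \<Sum>b\<in>P. X a c * T c b * X a b)"
    by (intro sum.cong refl sum.swap)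
  finally show ?thesis .
qed

lemma pos_def_square_root_unique:
  assumes "finite P" and pos: "pos_def P R" "pos_def P T"
    and supp: "supported P R" "supported P T"
    and squares: "\<And>a b. a \<in> P \<Longrightarrow> b \<in> P \<Longrightarrow> mat_mult P R R a b = mat_mult P T T a b"
  shows "R = T"
proof -
  define X where "X a b = R a b - T a b" for a b
  define qR where "qR b = (\<Sum>a\<in>P. \<Sum>c\<in>P. X a b * R a c * X c b)" for b
  define qT where "qT a = (\<Sum>c\<in>P. \<Sum>b\<in>P. X a c * T c b * X a b)" for a
  \<comment> \<open>\<open>R X + X T = R\<^sup>2 - T\<^sup>2 = 0\<close>, and pairing it with \<open>X\<close> gives a sum of nonnegative quadratic forms\<close>
  have "(\<Sum>c\<in>P. R a c * X c b) + (\<Sum>c\<in>P. X a c * T c b) = 0" if "a \<in> P" "b \<in> P" for a b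
    using squares[OF that] unfolding X_def mat_mult_def by (simp add: algebra_simps sum_subtractf)
  then have "(\<Sum>b\<in>P. qR b) + (\<Sum>a\<in>P. qT a) = 0"
    unfolding qR_def qT_def sum_pair_sylvester_eq_quad_forms[symmetric] by simp
  moreover have qR: "0 \<le> qR b" for b unfolding qR_def by (rule pos_def_quad_form_nonneg[OF pos(1)])
  moreover have "0 \<le> qT a" for a unfolding qT_def by (rule pos_def_quad_form_nonneg[OF pos(2)])
  ultimately have "(\<Sum>b\<in>P. qR b) = 0" using sum_nonneg[of P qR] sum_nonneg[of P qT] by fastforce
  then have "qR b = 0" if "b \<in> P" for b using assms(1) qR that by (simp add: sum_nonneg_eq_0_iff)
  moreover have "0 < qR b" if "a \<in> P" "X a b \<noteq> 0" for a b
  proof -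
    have "\<exists>a\<in>P. X a b \<noteq> 0" using that by blast
    from pos(1)[unfolded pos_def_def, THEN conjunct2, rule_format, OF this] show ?thesis
      unfolding qR_def .
  qed
  ultimately have X: "X a b = 0" if "a \<in> P" "b \<in> P" for a b
    using that by force
  show "R = T"
  proof (intro ext)
    fix a b
    show "R a b = T a b"
      using X[of a b] supp by (cases "a \<in> P \<and> b \<in> P") (auto simp: X_def supported_def)
  qed
qed

section \<open>The inverse square root of a matrix close to the identity\<close>

lemma abs_gbinomial_minus_half_le_1: "\<bar>(-1/2 :: real) gchoose k\<bar> \<le> 1"
proof -
  have "\<bar>fact k * ((-1/2 :: real) gchoose k)\<bar> \<le> fact k"
    unfolding gbinomial_mult_fact unfolding abs_prod fact_prod_Suc of_nat_prod
    by (intro prod_mono) auto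
  then show ?thesis by (simp add: abs_mult)
qed

lemma gbinomial_minus_half_convolution:
  "(\<Sum>i\<le>k. ((-1/2 :: real) gchoose i) * ((-1/2) gchoose (k - i))) = (-1) ^ k"
proof -
  have "(\<Sum>i\<le>k. ((-1/2 :: real) gchoose i) * ((-1/2) gchoose (k - i))) = (-1 :: real) gchoose k"
    using gbinomial_Vandermonde[of "-1/2 :: real" "-1/2" k] by (simp add: atLeast0AtMost)
  also have "\<dots> = (-1) ^ k"
    using gbinomial_minus[of "1 :: real" k] binomial_gbinomial[of k k, where 'a = real] by simp
  finally show ?thesis .
qed

lemma sums_quarter_powers: "(\<lambda>k. (1/4 :: real) ^ Suc k) sums (1/3)"
  using sums_mult[OF geometric_sums[of "1/4 :: real"], of "1/4"] by simp

locale near_identity =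
  fixes P :: "'i set" and A :: "'i mat"
  assumes finite_P: "finite P"
    and symmetric: "\<And>a b. a \<in> P \<Longrightarrow> b \<in> P \<Longrightarrow> A a b = A b a"
    and row_deviation: "\<And>a. a \<in> P \<Longrightarrow> (\<Sum>b\<in>P. \<bar>A a b - (if a = b then 1 else 0)\<bar>) \<le> 1/4"
begin

definition deviation :: "'i mat" where
  "deviation = (\<lambda>a b. if a \<in> P \<and> b \<in> P then A a b - id_mat P a b else 0)"

abbreviation dpow :: "nat \<Rightarrow> 'i mat" where
  "dpow \<equiv> mat_pow P deviation"

definition isqrt_series :: "'i mat" where
  "isqrt_series a b = (\<Sum>k. ((-1/2) gchoose k) * dpow k a b)"

definition inverse_series :: "'i mat" where
  "inverse_series a b = (\<Sum>k. (-1) ^ k * dpow k a b)"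

lemma supported_deviation: "supported P deviation"
  by (simp add: supported_def deviation_def)

lemma deviation_symmetric: "deviation a b = deviation b a"
  using symmetric by (auto simp: deviation_def id_mat_def)

lemma A_eq_id_mat_plus_deviation: "a \<in> P \<Longrightarrow> b \<in> P \<Longrightarrow> A a b = id_mat P a b + deviation a b"
  by (simp add: deviation_def)

lemma row_sum_dpow_le: "(\<Sum>b\<in>P. \<bar>dpow k a b\<bar>) \<le> (1/4) ^ k"
proof (rule row_sum_mat_pow_le[OF finite_P])
  show "(\<Sum>b\<in>P. \<bar>deviation a b\<bar>) \<le> 1/4" for a
    using row_deviation[of a] by (cases "a \<in> P") (simp_all add: deviation_def id_mat_def)
qed simp

lemma abs_dpow_le: "\<bar>dpow k a b\<bar> \<le> (1/4) ^ k"
  using abs_entry_le_row_sum[OF finite_P supported_mat_pow[OF supported_deviation]] row_sum_dpow_le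
  by (rule order_trans)

lemma summable_abs_series:
  assumes "\<And>k. \<bar>c k\<bar> \<le> 1"
  shows "summable (\<lambda>k. \<bar>c k * dpow k a b\<bar>)"
proof (rule summable_comparison_test'[OF summable_geometric[of "1/4 :: real"]])
  show "norm \<bar>c k * dpow k a b\<bar> \<le> (1/4) ^ k" for k
    using mult_mono[OF assms abs_dpow_le] by (simp add: abs_mult)
qed simp

lemma summable_abs_isqrt_terms: "summable (\<lambda>k. \<bar>((-1/2) gchoose k) * dpow k a b\<bar>)"
  by (rule summable_abs_series) (rule abs_gbinomial_minus_half_le_1)

lemma summable_isqrt_terms: "summable (\<lambda>k. ((-1/2) gchoose k) * dpow k a b)"
  by (rule summable_rabs_cancel[OF summable_abs_isqrt_terms])

lemma supported_isqrt_series: "supported P isqrt_series"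
  using supported_mat_pow[OF supported_deviation] by (simp add: supported_def isqrt_series_def)

lemma isqrt_series_symmetric: "isqrt_series a b = isqrt_series b a"
  unfolding isqrt_series_def
  by (simp add: mat_pow_symmetric[OF finite_P supported_deviation deviation_symmetric])

lemma row_deviation_isqrt_series:
  assumes a: "a \<in> P"
  shows "(\<Sum>b\<in>P. \<bar>isqrt_series a b - (if a = b then 1 else 0)\<bar>) \<le> 1/3"
proof -
  define t where "t b k = \<bar>((-1/2) gchoose Suc k) * dpow (Suc k) a b\<bar>" for b k
  have t: "summable (t b)" for b
    unfolding t_def using summable_abs_isqrt_terms[of a b]
    by (subst summable_Suc_iff)
  have "isqrt_series a b - (if a = b then 1 else 0) = (\<Sum>k. ((-1/2) gchoose Suc k) * dpow (Suc k) a b)"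
    if "b \<in> P" for b
    using suminf_split_head[OF summable_isqrt_terms[of a b]] a that
    by (simp add: isqrt_series_def id_mat_def del: mat_pow.simps(2))
  then have "\<bar>isqrt_series a b - (if a = b then 1 else 0)\<bar> \<le> (\<Sum>k. t b k)" if "b \<in> P" for b
    unfolding t_def using that summable_rabs[OF t[unfolded t_def]] by simp
  then have "(\<Sum>b\<in>P. \<bar>isqrt_series a b - (if a = b then 1 else 0)\<bar>) \<le> (\<Sum>b\<in>P. \<Sum>k. t b k)"
    by (rule sum_mono)
  also have "\<dots> = (\<Sum>k. \<Sum>b\<in>P. t b k)"
    by (rule suminf_sum[symmetric, OF t])
  also have "\<dots> \<le> (\<Sum>k. (1/4) ^ Suc k)"
  proof (rule suminf_le)
    show "(\<Sum>b\<in>P. t b k) \<le> (1/4) ^ Suc k" for k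
    proof -
      have "(\<Sum>b\<in>P. t b k) \<le> (\<Sum>b\<in>P. \<bar>dpow (Suc k) a b\<bar>)"
        unfolding t_def abs_mult
        by (intro sum_mono mult_left_le_one_le abs_gbinomial_minus_half_le_1) auto
      then show ?thesis using row_sum_dpow_le by (rule order_trans)
    qed
    show "summable (\<lambda>k. \<Sum>b\<in>P. t b k)" by (intro summable_sum t)
    show "summable (\<lambda>k. (1/4 :: real) ^ Suc k)" using sums_quarter_powers by (rule sums_summable)
  qed
  finally show ?thesis using sums_unique[OF sums_quarter_powers] by simp
qed

lemma pos_def_isqrt_series: "pos_def P isqrt_series"
  using finite_P isqrt_series_symmetric row_deviation_isqrt_series
  by (rule pos_def_of_row_deviation) auto

\<comment> \<open>Cauchy product of the binomial series with itself, using \<open>\<Sum>\<^sub>i c\<^sub>i c\<^sub>k\<^sub>-\<^sub>i = (-1)\<^sup>k\<close>\<close>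
lemma isqrt_series_square: "mat_mult P isqrt_series isqrt_series a b = inverse_series a b"
proof -
  let ?c = "\<lambda>k. (-1/2 :: real) gchoose k"
  define g where "g d k = (\<Sum>i\<le>k. (?c i * dpow i a d) * (?c (k - i) * dpow (k - i) d b))" for d k
  have g: "g d sums (isqrt_series a d * isqrt_series d b)" for d
    unfolding g_def isqrt_series_def
    using summable_abs_isqrt_terms
    by (intro Cauchy_product_sums) simp_all
  have "mat_mult P isqrt_series isqrt_series a b = (\<Sum>d\<in>P. \<Sum>k. g d k)"
    unfolding mat_mult_def by (intro sum.cong refl sums_unique g)
  also have "\<dots> = (\<Sum>k. \<Sum>d\<in>P. g d k)"
    using g by (intro suminf_sum[symmetric] sums_summable)
  also have "\<dots> = inverse_series a b"
    unfolding inverse_series_def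
  proof (intro suminf_cong)
    fix k
    have "(\<Sum>d\<in>P. g d k) = (\<Sum>i\<le>k. ?c i * ?c (k - i) * mat_mult P (dpow i) (dpow (k - i)) a b)"
      unfolding g_def mat_mult_def by (subst sum.swap) (simp add: sum_distrib_left mult_ac)
    also have "\<dots> = (\<Sum>i\<le>k. ?c i * ?c (k - i)) * dpow k a b"
      by (simp add: mat_pow_add[OF finite_P supported_deviation] sum_distrib_right)
    also have "\<dots> = (-1) ^ k * dpow k a b"
      by (simp only: gbinomial_minus_half_convolution)
    finally show "(\<Sum>d\<in>P. g d k) = (-1) ^ k * dpow k a b" .
  qed
  finally show ?thesis .
qed

lemma summable_inverse_terms: "summable (\<lambda>k. (-1) ^ k * dpow k a b)"
  by (rule summable_rabs_cancel, rule summable_abs_series) simp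

\<comment> \<open>the series for \<open>A\<^sup>-\<^sup>1 A = A\<^sup>-\<^sup>1 + A\<^sup>-\<^sup>1 D\<close> telescopes\<close>
lemma inverse_series_left_inverse:
  assumes a: "a \<in> P" and b: "b \<in> P"
  shows "mat_mult P inverse_series A a b = (if a = b then 1 else 0)"
proof -
  define s where "s k = (-1) ^ k * dpow k a b" for k
  have s: "summable s" unfolding s_def by (rule summable_inverse_terms)
  have "(\<Sum>c\<in>P. inverse_series a c * deviation c b) = (\<Sum>k. \<Sum>c\<in>P. (-1) ^ k * dpow k a c * deviation c b)"
    unfolding inverse_series_def
    by (simp add: suminf_sum summable_mult2 summable_inverse_terms suminf_mult2)
  also have "\<dots> = (\<Sum>k. - s (Suc k))"
    unfolding s_def mat_pow_Suc_right[OF finite_P supported_deviation]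
    by (simp add: mat_mult_def sum_distrib_left sum_negf mult_ac)
  also have "\<dots> = - (\<Sum>k. s (Suc k))"
    using s by (simp add: suminf_minus summable_Suc_iff)
  also have "\<dots> = s 0 - inverse_series a b"
    using suminf_split_head[OF s] unfolding inverse_series_def s_def[symmetric] by simp
  finally have shift: "(\<Sum>c\<in>P. inverse_series a c * deviation c b) = s 0 - inverse_series a b" .
  have "mat_mult P inverse_series A a b
      = inverse_series a b + (\<Sum>c\<in>P. inverse_series a c * deviation c b)"
    using a b by (simp add: mat_mult_def A_eq_id_mat_plus_deviation distrib_left sum.distrib
        sum_mult_id_mat_right[OF finite_P])
  then show ?thesis using a b by (simp add: shift s_def id_mat_def)
qed


lemma left_null_vector_eq_0:
  assumes null: "\<And>b. b \<in> P \<Longrightarrow> (\<Sum>c\<in>P. w c * A c b) = 0" and "c \<in> P"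
  shows "w c = 0"
proof -
  have "\<bar>w b\<bar> \<le> (\<Sum>c\<in>P. \<bar>w c\<bar> * \<bar>deviation c b\<bar>)" if b: "b \<in> P" for b
  proof -
    have "w b = - (\<Sum>c\<in>P. w c * deviation c b)"
      using null[OF b] b by (simp add: A_eq_id_mat_plus_deviation distrib_left sum.distrib
          sum_mult_id_mat_right[OF finite_P])
    then show ?thesis by (simp add: abs_mult order_trans[OF sum_abs])
  qed
  then have "(\<Sum>b\<in>P. \<bar>w b\<bar>) \<le> (\<Sum>c\<in>P. \<bar>w c\<bar> * (\<Sum>b\<in>P. \<bar>deviation c b\<bar>))"
    by (subst sum_distrib_left, subst sum.swap) (rule sum_mono)
  also have "\<dots> \<le> (\<Sum>c\<in>P. \<bar>w c\<bar> * (1/4))"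
    using row_sum_dpow_le[of 1] by (intro sum_mono mult_left_mono)
      (simp_all add: mat_mult_id_mat_right[OF finite_P supported_deviation])
  finally have "(\<Sum>b\<in>P. \<bar>w b\<bar>) \<le> (\<Sum>b\<in>P. \<bar>w b\<bar>) / 4"
    by (simp add: sum_divide_distrib)
  then have "(\<Sum>b\<in>P. \<bar>w b\<bar>) = 0"
    by (intro order_antisym) (simp_all add: sum_nonneg)
  then show ?thesis using finite_P \<open>c \<in> P\<close> by (simp add: sum_nonneg_eq_0_iff)
qed

lemma isqrt_series_is_inv_sqrt:
  "supported P isqrt_series \<and> pos_def P isqrt_series \<and>
   is_identity P (mat_mult P (mat_mult P isqrt_series isqrt_series) A)"
  using supported_isqrt_series pos_def_isqrt_series inverse_series_left_inverse
  by (simp add: is_identity_def isqrt_series_square[abs_def])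

lemma inv_sqrt_unique:
  assumes "supported P R" "pos_def P R" "is_identity P (mat_mult P (mat_mult P R R) A)"
  shows "R = isqrt_series"
proof (rule pos_def_square_root_unique[OF finite_P assms(2) pos_def_isqrt_series assms(1)
      supported_isqrt_series])
  fix a c assume "a \<in> P" "c \<in> P"
  \<comment> \<open>both squares are left inverses of \<open>A\<close>, and \<open>A\<close> has no nonzero left null vector\<close>
  show "mat_mult P R R a c = mat_mult P isqrt_series isqrt_series a c"
  proof (rule left_null_vector_eq_0[where w = "\<lambda>c. mat_mult P R R a c - mat_mult P isqrt_series isqrt_series a c",
        simplified, OF _ \<open>c \<in> P\<close>])
    fix b assume "b \<in> P"
    then show "(\<Sum>c\<in>P. (mat_mult P R R a c - mat_mult P isqrt_series isqrt_series a c) * A c b) = 0"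
      using assms(3) isqrt_series_is_inv_sqrt \<open>a \<in> P\<close>
      by (simp add: is_identity_def mat_mult_def[of P _ A] left_diff_distrib sum_subtractf)
  qed
qed

lemma inv_sqrt_eq_isqrt_series: "inv_sqrt P A = isqrt_series"
  unfolding inv_sqrt_def
  using isqrt_series_is_inv_sqrt inv_sqrt_unique by (intro the_equality) (auto simp: supported_def)

lemma abs_inv_sqrt_sub_id_le:
  assumes "a \<in> P" "b \<in> P"
  shows "\<bar>inv_sqrt P A a b - (if a = b then 1 else 0)\<bar> \<le> 1/3"
  using member_le_sum[of b P "\<lambda>b. \<bar>isqrt_series a b - (if a = b then 1 else 0)\<bar>"]
    row_deviation_isqrt_series[OF assms(1)] assms finite_P
  by (simp add: inv_sqrt_eq_isqrt_series)

end

section \<open>Row bounds for the overlap matrix\<close>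

lemma exp_neg_two_plus_exp_neg_three_le: "exp (-2) + exp (-3 :: real) \<le> 1/4"
proof -
  have e: "5/2 \<le> exp (1 :: real)" using exp_lower_Taylor_quadratic[of 1] by simp
  have "25/4 \<le> exp (1 :: real) * exp 1" "125/8 \<le> exp (1 :: real) * exp 1 * exp 1"
    using mult_mono[OF e e] mult_mono[OF mult_mono[OF e e] e] by simp_all
  then have "25/4 \<le> exp (2 :: real)" "125/8 \<le> exp (3 :: real)"
    by (simp_all flip: exp_add)
  then have "exp (-2) \<le> (4/25 :: real)" "exp (-3) \<le> (8/125 :: real)"
    by (simp_all add: exp_minus field_simps)
  then show ?thesis by simp
qed

lemma row_deviation_le_quarter:
  fixes M :: "'i mat" and K :: "'i \<Rightarrow> bool"
  assumes "finite P" "a \<in> P" "M a a = 1"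
    and partners: "card {b \<in> P. b \<noteq> a \<and> K b} \<le> 1"
    and "0 \<le> c" "real (card P) * c \<le> exp (-3)"
    and bounds: "\<And>b. b \<in> P \<Longrightarrow> b \<noteq> a \<Longrightarrow> 0 \<le> M a b \<and> M a b \<le> (if K b then exp (-2) else c)"
  shows "(\<Sum>b\<in>P. \<bar>M a b - (if a = b then 1 else 0)\<bar>) \<le> 1/4"
proof -
  define N where "N = {b \<in> P. b \<noteq> a \<and> K b}"
  have "\<bar>M a b - (if a = b then 1 else 0)\<bar> \<le> (if b \<in> N then exp (-2) else 0) + c" if "b \<in> P" for b
    using bounds[OF that] \<open>M a a = 1\<close> \<open>0 \<le> c\<close> that by (auto simp: N_def)
  then have "(\<Sum>b\<in>P. \<bar>M a b - (if a = b then 1 else 0)\<bar>) \<le> (\<Sum>b\<in>P. (if b \<in> N then exp (-2) else 0) + c)"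
    by (rule sum_mono)
  also have "\<dots> = real (card N) * exp (-2) + real (card P) * c"
    using \<open>finite P\<close> by (simp add: sum.distrib sum.If_cases N_def Int_def)
  also have "\<dots> \<le> 1 * exp (-2) + exp (-3)"
    using partners assms(6) by (intro add_mono mult_right_mono) (simp_all add: N_def)
  finally show ?thesis using exp_neg_two_plus_exp_neg_three_le by linarith
qed

lemma row_deviation_masked_overlap_le:
  fixes x :: "nat \<times> nat \<Rightarrow> real^3" and K :: "nat \<times> nat \<Rightarrow> bool" and n :: nat
  assumes "finite P" "a \<in> P" "0 < \<alpha>" "\<alpha> \<le> \<beta>" "0 < n" "real (card P) \<le> (real n)^2"
    and "card {b \<in> P. b \<noteq> a \<and> K b} \<le> 1"
    and near: "\<And>b. b \<in> P \<Longrightarrow> b \<noteq> a \<Longrightarrow> K b \<Longrightarrow> 4 \<le> \<alpha> * (dist (x a) (x b))^2"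
    and far: "\<And>b. b \<in> P \<Longrightarrow> b \<noteq> a \<Longrightarrow> \<not> K b \<Longrightarrow> 4 * ln n + 6 \<le> \<alpha> * (dist (x a) (x b))^2"
  shows "(\<Sum>b\<in>P. \<bar>(if a = b \<or> keep b then overlap \<alpha> \<beta> x a b else 0) - (if a = b then 1 else 0)\<bar>) \<le> 1/4"
proof (rule row_deviation_le_quarter[where c = "exp (-3) / (real n)^2"])
  fix b assume b: "b \<in> P" "b \<noteq> a"
  have "exp (-(3 + 2 * ln n)) = exp (-3) / (real n)^2"
    using \<open>0 < n\<close> by (simp add: exp_diff exp_of_nat_mult[of 2, simplified])
  moreover have "overlap \<alpha> \<beta> x a b \<le> (if K b then exp (-2) else exp (-(3 + 2 * ln n)))"
    using near[OF b] far[OF b] overlap_le_exp[OF assms(3,4), of 2 x a b]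
      overlap_le_exp[OF assms(3,4), of "3 + 2 * ln n" x a b] by auto
  ultimately show "0 \<le> (if a = b \<or> keep b then overlap \<alpha> \<beta> x a b else 0) \<and>
      (if a = b \<or> keep b then overlap \<alpha> \<beta> x a b else 0) \<le> (if K b then exp (-2) else exp (-3) / (real n)^2)"
    using assms(3,4) order.strict_trans2[OF assms(3,4)] by (auto simp: overlap_nonneg)
next
  show "real (card P) * (exp (-3) / (real n)^2) \<le> exp (-3)"
    using assms(5,6) by (simp add: field_simps)
qed (use assms overlap_self order.strict_trans2[OF assms(3,4)] in auto)

lemma abs_inv_sqrt_masked_overlap_sub_id_le:
  fixes x :: "nat \<times> nat \<Rightarrow> real^3" and K keep :: "nat \<times> nat \<Rightarrow> nat \<times> nat \<Rightarrow> bool" and n :: nat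
  assumes "finite P" "0 < \<alpha>" "\<alpha> \<le> \<beta>" "0 < n" "real (card P) \<le> (real n)^2"
    and keep: "\<And>a b. keep a b = keep b a"
    and partners: "\<And>a. a \<in> P \<Longrightarrow> card {b \<in> P. b \<noteq> a \<and> K a b} \<le> 1"
    and near: "\<And>a b. a \<in> P \<Longrightarrow> b \<in> P \<Longrightarrow> a \<noteq> b \<Longrightarrow> K a b \<Longrightarrow> 4 \<le> \<alpha> * (dist (x a) (x b))^2"
    and far: "\<And>a b. a \<in> P \<Longrightarrow> b \<in> P \<Longrightarrow> a \<noteq> b \<Longrightarrow> \<not> K a b \<Longrightarrow>
      4 * ln n + 6 \<le> \<alpha> * (dist (x a) (x b))^2"
    and "a \<in> P" "b \<in> P"
  shows "\<bar>inv_sqrt P (\<lambda>a b. if a = b \<or> keep a b then overlap \<alpha> \<beta> x a b else 0) a b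
    - (if a = b then 1 else 0)\<bar> \<le> 1/3"
proof (rule near_identity.abs_inv_sqrt_sub_id_le[OF near_identity.intro])
  show "(\<Sum>b\<in>P. \<bar>(if a = b \<or> keep a b then overlap \<alpha> \<beta> x a b else 0) - (if a = b then 1 else 0)\<bar>) \<le> 1/4"
    if a: "a \<in> P" for a
  proof (rule row_deviation_masked_overlap_le[where K = "K a"])
    show "4 \<le> \<alpha> * (dist (x a) (x b))^2" if "b \<in> P" "b \<noteq> a" "K a b" for b
      using near[OF a that(1)] that by simp
    show "4 * ln n + 6 \<le> \<alpha> * (dist (x a) (x b))^2" if "b \<in> P" "b \<noteq> a" "\<not> K a b" for b
      using far[OF a that(1)] that by simp
  qed (use assms partners[OF a] a in simp_all)
qed (use assms overlap_commute in auto)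

definition same_block ::
    "nat set set \<Rightarrow> (nat \<Rightarrow> nat \<Rightarrow> (nat \<times> nat) set) \<Rightarrow> nat \<times> nat \<Rightarrow> nat \<times> nat \<Rightarrow> bool"
  where "same_block E B a b \<longleftrightarrow> (\<exists>i j. {i, j} \<in> E \<and> i \<noteq> j \<and> a \<in> B i j \<and> b \<in> B i j)"

lemma same_block_commute: "same_block E B a b \<longleftrightarrow> same_block E B b a"
  unfolding same_block_def by blast

lemma same_block_dist:
  assumes B: "B = (\<lambda>i j. {(i, pt i j), (j, pt j i)})"
    and edge_dist: "\<And>i j. {i, j} \<in> E \<Longrightarrow> i \<noteq> j \<Longrightarrow> dist (x (i, pt i j)) (x (j, pt j i)) = \<gamma> {i, j}"
    and "same_block E B a b" "a \<noteq> b"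
  shows "\<exists>e\<in>E. dist (x a) (x b) = \<gamma> e"
  using assms(3,4) edge_dist unfolding same_block_def B by (fastforce simp: dist_commute insert_commute)

lemma card_same_block_partners_le_1:
  assumes "finite P" and B: "B = (\<lambda>i j. {(i, pt i j), (j, pt j i)})"
    and disjoint: "\<And>i j k l. {i, j} \<in> E \<Longrightarrow> {k, l} \<in> E \<Longrightarrow> i \<noteq> j \<Longrightarrow> k \<noteq> l \<Longrightarrow>
      {i, j} \<noteq> {k, l} \<Longrightarrow> B i j \<inter> B k l = {}"
  shows "card {b \<in> P. b \<noteq> a \<and> same_block E B a b} \<le> 1"
proof -
  \<comment> \<open>the blocks are disjoint doubletons, so \<open>a\<close> has at most one partner\<close>
  have "b = b'" if blocks: "same_block E B a b" "same_block E B a b'"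
    and distinct: "a \<noteq> b" "a \<noteq> b'" for b b'
  proof -
    obtain i j k l where ij: "{i, j} \<in> E" "i \<noteq> j" "a \<in> B i j" "b \<in> B i j"
      and kl: "{k, l} \<in> E" "k \<noteq> l" "a \<in> B k l" "b' \<in> B k l"
      using blocks unfolding same_block_def by blast
    then have "{i, j} = {k, l}" using disjoint by blast
    then have "B k l = B i j" by (auto simp: B doubleton_eq_iff)
    then show ?thesis using ij(3,4) kl(4) distinct by (auto simp: B)
  qed
  then show ?thesis
    using \<open>finite P\<close> unfolding One_nat_def by (subst card_le_Suc0_iff_eq) auto
qed

lemma max_abs_le:
  assumes "finite P" "P \<noteq> {}" "\<And>a b. a \<in> P \<Longrightarrow> b \<in> P \<Longrightarrow> \<bar>M a b\<bar> \<le> c"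
  shows "max_abs P M \<le> c"
proof -
  have "{\<bar>M a b\<bar> | a b. a \<in> P \<and> b \<in> P} = (\<lambda>(a, b). \<bar>M a b\<bar>) ` (P \<times> P)" by auto
  then show ?thesis unfolding max_abs_def using assms by (auto intro!: Max.boundedI)
qed

lemma abs_le_max_abs:
  assumes "finite P" "a \<in> P" "b \<in> P"
  shows "\<bar>M a b\<bar> \<le> max_abs P M"
proof -
  have "{\<bar>M a b\<bar> | a b. a \<in> P \<and> b \<in> P} = (\<lambda>(a, b). \<bar>M a b\<bar>) ` (P \<times> P)" by auto
  then show ?thesis unfolding max_abs_def using assms by (auto intro!: Max_ge)
qed

lemma max_abs_split_le_2:
  assumes "finite P" "P \<noteq> {}"
    and "\<And>a b. a \<in> P \<Longrightarrow> b \<in> P \<Longrightarrow> \<bar>R a b - (if a = b then 1 else 0)\<bar> \<le> 1/3"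
    and "\<And>a b. a \<in> P \<Longrightarrow> b \<in> P \<Longrightarrow> \<bar>R' a b - (if a = b then 1 else 0)\<bar> \<le> 1/3"
  shows "max_abs P R \<le> max_abs P R' + max_abs P (\<lambda>a b. R a b - R' a b) \<and>
    max_abs P R' + max_abs P (\<lambda>a b. R a b - R' a b) \<le> 2"
proof (intro conjI)
  have "\<bar>R' a b\<bar> \<le> 4/3" if "a \<in> P" "b \<in> P" for a b
    using assms(4)[OF that] unfolding abs_le_iff by (auto split: if_splits)
  then have "max_abs P R' \<le> 4/3" by (rule max_abs_le[OF assms(1,2)])
  moreover have "\<bar>R a b - R' a b\<bar> \<le> 2/3" if "a \<in> P" "b \<in> P" for a b
    using assms(3,4)[OF that] unfolding abs_le_iff by (auto split: if_splits)
  then have "max_abs P (\<lambda>a b. R a b - R' a b) \<le> 2/3" by (rule max_abs_le[OF assms(1,2)])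
  ultimately show "max_abs P R' + max_abs P (\<lambda>a b. R a b - R' a b) \<le> 2" by simp
  show "max_abs P R \<le> max_abs P R' + max_abs P (\<lambda>a b. R a b - R' a b)"
    using abs_le_max_abs[OF assms(1), of _ _ R'] abs_le_max_abs[OF assms(1), of _ _ "\<lambda>a b. R a b - R' a b"]
    by (intro max_abs_le[OF assms(1,2)]) (smt (verit))
qed

theorem mainTheorem7:
  fixes n d :: nat
    and E :: "nat set set"
    and \<alpha> \<beta> \<Gamma> :: real
    and x :: "nat \<times> nat \<Rightarrow> real^3"
    and pt :: "nat \<Rightarrow> nat \<Rightarrow> nat"
    and \<gamma> :: "nat set \<Rightarrow> real"
  defines "P \<equiv> {1..n} \<times> {0..d}"
    and "B \<equiv> (\<lambda>i j. {(i, pt i j), (j, pt j i)})"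
    and "S \<equiv> overlap \<alpha> \<beta> x"
    and "\<omega>min \<equiv> Min {\<alpha> * (\<gamma> e)\<^sup>2 | e. e \<in> E}"
  assumes n2: "n \<ge> 2"
    and d1: "1 \<le> d" and dn: "d \<le> n - 1"
    and E_edges: "\<forall>e\<in>E. \<exists>i j. e = {i, j} \<and> i \<noteq> j \<and> i \<in> {1..n} \<and> j \<in> {1..n}"
    and E_ne: "E \<noteq> {}"
    and deg: "\<forall>i\<in>{1..n}. card {j. {i, j} \<in> E} \<le> d"
    and ab: "0 < \<alpha>" "\<alpha> \<le> \<beta>"
    and Gpos: "0 < \<Gamma>"
    and x_inj: "inj_on x P"
    and edge_pair: "\<forall>i j. {i, j} \<in> E \<longrightarrow> i \<noteq> j \<longrightarrow>
         pt i j \<in> {1..d} \<and> pt j i \<in> {1..d} \<and> 0 < \<gamma> {i, j} \<and> \<gamma> {i, j} < \<Gamma> \<and>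
         (\<forall>p\<in>{1..d}. \<forall>q\<in>{1..d}. dist (x (i, p)) (x (j, q)) = \<gamma> {i, j} \<longleftrightarrow> p = pt i j \<and> q = pt j i)"
    and B_disj: "\<forall>i j k l. {i, j} \<in> E \<longrightarrow> {k, l} \<in> E \<longrightarrow> i \<noteq> j \<longrightarrow> k \<noteq> l \<longrightarrow>
         {i, j} \<noteq> {k, l} \<longrightarrow> B i j \<inter> B k l = {}"
    and far: "\<forall>a\<in>P. \<forall>b\<in>P. a \<noteq> b \<longrightarrow>
         \<not> (\<exists>i j. {i, j} \<in> E \<and> i \<noteq> j \<and> a \<in> B i j \<and> b \<in> B i j) \<longrightarrow> dist (x a) (x b) \<ge> \<Gamma>"
    and hGamma: "\<alpha> * \<Gamma>\<^sup>2 \<ge> 4 * ln (real n) + \<omega>min + 2"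
    and hw: "\<omega>min \<ge> 4"
  shows "let Sblock = (\<lambda>a b. if a = b \<or> (\<exists>i j. {i, j} \<in> E \<and> i \<noteq> j \<and> a \<in> B i j \<and> b \<in> B i j)
                             then S a b else 0);
             R = inv_sqrt P S;
             Raprx = inv_sqrt P Sblock;
             Rneg = (\<lambda>a b. R a b - Raprx a b)
         in max_abs P R \<le> max_abs P Raprx + max_abs P Rneg \<and>
            max_abs P Raprx + max_abs P Rneg \<le> 2"
proof -
  have P: "P = {1..n} \<times> {0..d}" and B: "B = (\<lambda>i j. {(i, pt i j), (j, pt j i)})"
    and S: "S = overlap \<alpha> \<beta> x" and \<omega>min: "\<omega>min = Min {\<alpha> * (\<gamma> e)\<^sup>2 | e. e \<in> E}"
    using assms(1-4) by simp_all
  have finite_P: "finite P" and P_ne: "P \<noteq> {}" using n2 by (auto simp: P)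
  have "card P \<le> n * n"
    using dn n2 mult_le_mono2[of "d + 1" n n] by (simp add: P card_cartesian_product)
  then have card_P: "real (card P) \<le> (real n)^2"
    by (metis of_nat_le_iff of_nat_mult power2_eq_square)
  have "finite E" using E_edges by (intro finite_subset[of E "Pow {1..n}"]) auto
  then have \<omega>min_le: "\<omega>min \<le> \<alpha> * (\<gamma> e)\<^sup>2" if "e \<in> E" for e
    unfolding \<omega>min using that by (intro Min_le) auto
  have edge_dist: "dist (x (i, pt i j)) (x (j, pt j i)) = \<gamma> {i, j}" if "{i, j} \<in> E" "i \<noteq> j" for i j
    using edge_pair that by blast
  have near_decay: "4 \<le> \<alpha> * (dist (x a) (x b))^2" if "same_block E B a b" "a \<noteq> b" for a b
    using same_block_dist[where x = x and \<gamma> = \<gamma>, OF B edge_dist that] \<omega>min_le hw by fastforce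
  have far_decay: "4 * ln n + 6 \<le> \<alpha> * (dist (x a) (x b))^2"
    if "a \<in> P" "b \<in> P" "a \<noteq> b" "\<not> same_block E B a b" for a b
  proof -
    have "\<Gamma> \<le> dist (x a) (x b)" using far that unfolding same_block_def by blast
    then have "\<alpha> * \<Gamma>\<^sup>2 \<le> \<alpha> * (dist (x a) (x b))\<^sup>2"
      using Gpos ab(1) by (simp add: power_mono)
    then show ?thesis using hGamma hw by linarith
  qed
  have partners: "card {b \<in> P. b \<noteq> a \<and> same_block E B a b} \<le> 1" for a
    using finite_P B_disj by (intro card_same_block_partners_le_1[OF _ B]) blast+
  have n_pos: "0 < n" using n2 by simp
  have R_close: "\<bar>inv_sqrt P S a b - (if a = b then 1 else 0)\<bar> \<le> 1/3" if "a \<in> P" "b \<in> P" for a b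
    using abs_inv_sqrt_masked_overlap_sub_id_le[where x = x and K = "same_block E B"
        and keep = "\<lambda>_ _. True", OF finite_P ab n_pos card_P refl partners near_decay far_decay that]
    by (simp add: S)
  have Raprx_close: "\<bar>inv_sqrt P (\<lambda>a b. if a = b \<or> same_block E B a b then S a b else 0) a b
      - (if a = b then 1 else 0)\<bar> \<le> 1/3" if "a \<in> P" "b \<in> P" for a b
    using abs_inv_sqrt_masked_overlap_sub_id_le[where x = x and K = "same_block E B"
        and keep = "same_block E B", OF finite_P ab n_pos card_P same_block_commute partners
        near_decay far_decay that]
    unfolding S .
  show ?thesis
    using max_abs_split_le_2[OF finite_P P_ne R_close Raprx_close]
    unfolding Let_def same_block_def .
qed

end
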